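(* Let $\mathcal{G}_R$ be the class of all finite reflexive graphs and let $G\in\mathcal{G}_R$. The class $\mathrm{Av}(G)=\{H\in\mathcal{G}_R: G\not\preceq H\}$, with respect to the homomorphic image ordering $\preceq$, is well quasi-ordered if and only if $G$ is isomorphic to $N_{n,k}$ for some natural numbers $n,k$ with $2k<n$.
   Context: A reflexive graph is a set with a symmetric edge relation having a loop at every vertex. A homomorphism maps edges to edges (and may collapse edges or non-edges to single vertices). Homomorphic image ordering: $A\preceq B$ iff there is a surjective homomorphism $B\to A$. For $2k\le n$, $N_{n,k}$ is the reflexive graph on $\{1,\dots,n\}$ with all pairs of distinct vertices adjacent except $\{1,2\},\{3,4\},\dots,\{2k-1,2k\}$ (obtained from $K_n$ by deleting $k$ disjoint edges). Well quasi-ordered means no infinite strictly decreasing sequence and no infinite antichain; graphs considered up to isomorphism. *)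

theory Defs
  imports Main
begin

text \<open>A graph with vertices drawn from nat: vertex set and adjacency relation.
  Every finite graph is isomorphic to one of this form.\<close>
type_synonym graph = "nat set \<times> (nat \<Rightarrow> nat \<Rightarrow> bool)"

definition verts :: "graph \<Rightarrow> nat set" where "verts G = fst G"
definition adj :: "graph \<Rightarrow> nat \<Rightarrow> nat \<Rightarrow> bool" where "adj G = snd G"

definition fin_refl_graph :: "graph \<Rightarrow> bool" where
  "fin_refl_graph G \<longleftrightarrow> finite (verts G)
     \<and> (\<forall>x y. adj G x y \<longrightarrow> x \<in> verts G \<and> y \<in> verts G)
     \<and> (\<forall>x y. adj G x y \<longrightarrow> adj G y x)
     \<and> (\<forall>x \<in> verts G. adj G x x)"

definition graph_hom :: "(nat \<Rightarrow> nat) \<Rightarrow> graph \<Rightarrow> graph \<Rightarrow> bool" where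
  "graph_hom f B A \<longleftrightarrow> f ` verts B \<subseteq> verts A
     \<and> (\<forall>x \<in> verts B. \<forall>y \<in> verts B. adj B x y \<longrightarrow> adj A (f x) (f y))"

text \<open>Homomorphic image ordering: A \<preceq> B iff there is a surjective homomorphism B \<rightarrow> A.\<close>
definition hom_image :: "graph \<Rightarrow> graph \<Rightarrow> bool" where
  "hom_image A B \<longleftrightarrow> (\<exists>f. graph_hom f B A \<and> f ` verts B = verts A)"

definition graph_iso :: "graph \<Rightarrow> graph \<Rightarrow> bool" where
  "graph_iso A B \<longleftrightarrow> (\<exists>f. bij_betw f (verts A) (verts B)
     \<and> (\<forall>x \<in> verts A. \<forall>y \<in> verts A. adj A x y \<longleftrightarrow> adj B (f x) (f y)))"

definition N_graph :: "nat \<Rightarrow> nat \<Rightarrow> graph" where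
  "N_graph n k = ({1..n}, (\<lambda>x y. x \<in> {1..n} \<and> y \<in> {1..n}
       \<and> \<not> (\<exists>i \<in> {1..k}. {x, y} = {2*i - 1, 2*i})))"

definition Av :: "graph \<Rightarrow> graph set" where
  "Av G = {H. fin_refl_graph H \<and> \<not> hom_image G H}"

text \<open>Since the
  ordering is isomorphism invariant, this is the notion up to isomorphism.\<close>
definition wqo_hom :: "graph set \<Rightarrow> bool" where
  "wqo_hom C \<longleftrightarrow>
     \<not> (\<exists>g :: nat \<Rightarrow> graph. (\<forall>i. g i \<in> C) \<and>
          (\<forall>i. hom_image (g (Suc i)) (g i) \<and> \<not> hom_image (g i) (g (Suc i))))
   \<and> \<not> (\<exists>g :: nat \<Rightarrow> graph. (\<forall>i. g i \<in> C) \<and>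
          (\<forall>i j. i \<noteq> j \<longrightarrow> \<not> hom_image (g i) (g j)))"

end

theory Submission
  imports Defs "HOL-Library.Ramsey" "HOL-Library.Equipollence"
begin

text \<open>
  If \<open>G\<close> is not some \<open>N_graph n k\<close> with \<open>2 * k < n\<close>, the graphs \<open>N_graph (2 * m) m\<close> with
  \<open>2 * m\<close> larger than \<open>G\<close> form an infinite antichain in \<open>Av G\<close>. Indeed, in a homomorphic
  image of \<open>N_graph n k\<close> every vertex has at most one non-neighbour, and if the image has fewer
  than \<open>n\<close> vertices some vertex is adjacent to everything. A graph of the first kind is some
  \<open>N_graph t j\<close>, and the dominating vertex forces \<open>2 * j < t\<close>; the graphs
  \<open>N_graph (2 * m) m\<close> themselves have no dominating vertex.

  Conversely, no class of finite graphs has a strictly descending chain: along it the number of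
  vertices, and then the number of non-edges, drops. If \<open>H\<close> avoids \<open>N_graph n k\<close> with
  \<open>2 * k < n\<close>, then \<open>H\<close> is a clique outside fewer than \<open>n\<close> vertices, since otherwise \<open>k\<close>
  disjoint non-edges can be picked greedily and \<open>H\<close> maps onto \<open>N_graph n k\<close>. Up to the ordering,
  such a graph is described by the adjacency among these core vertices and by the number of
  outside vertices with each possible neighbourhood in the core. As there are finitely many core
  patterns, Dickson's lemma on the counts yields, in every infinite sequence of such graphs, an
  earlier member that is a homomorphic image of a later one.
\<close>

section \<open>The graphs \<open>N_graph n k\<close>\<close>

lemma verts_pair [simp]: "verts (V, R) = V"
  by (simp add: verts_def)

lemma adj_pair [simp]: "adj (V, R) = R"
  by (simp add: adj_def)

lemma fin_refl_graphD:
  assumes "fin_refl_graph G"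
  shows "finite (verts G)" "adj G x y \<Longrightarrow> adj G y x" "x \<in> verts G \<Longrightarrow> adj G x x"
  using assms unfolding fin_refl_graph_def by blast+

text \<open>\<open>a\<close> and \<open>b\<close> are the two elements of one of the pairs \<open>{2 * i - 1, 2 * i}\<close>.\<close>

definition mates :: "nat \<Rightarrow> nat \<Rightarrow> bool" where
  "mates a b \<longleftrightarrow> a \<noteq> b \<and> (a + 1) div 2 = (b + 1) div 2"

lemma mates_sym: "mates a b \<Longrightarrow> mates b a"
  unfolding mates_def by auto

lemma nat_eq_block_cases: "x = 2 * ((x + 1) div 2) - 1 \<or> x = 2 * ((x + 1) div 2)" for x :: nat
  by (cases "even x") (auto elim!: evenE oddE)

lemma mates_unique: "mates a b \<Longrightarrow> mates a c \<Longrightarrow> b = c"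
  unfolding mates_def using nat_eq_block_cases[of a] nat_eq_block_cases[of b] nat_eq_block_cases[of c]
  by auto

lemma N_graph_removed_edge_iff:
  "(\<exists>i \<in> {1..k}. {a, b} = {2 * i - 1, 2 * i}) \<longleftrightarrow> mates a b \<and> (a + 1) div 2 \<le> k"
proof
  assume "\<exists>i \<in> {1..k}. {a, b} = {2 * i - 1, 2 * i}"
  then show "mates a b \<and> (a + 1) div 2 \<le> k"
    unfolding mates_def doubleton_eq_iff by auto
next
  assume "mates a b \<and> (a + 1) div 2 \<le> k"
  then show "\<exists>i \<in> {1..k}. {a, b} = {2 * i - 1, 2 * i}"
    using nat_eq_block_cases[of a] nat_eq_block_cases[of b] unfolding mates_def doubleton_eq_iff
    by (intro bexI[of _ "(a + 1) div 2"]) auto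
qed

lemma verts_N_graph [simp]: "verts (N_graph n k) = {1..n}"
  by (simp add: N_graph_def)

lemma adj_N_graph:
  "adj (N_graph n k) a b \<longleftrightarrow> a \<in> {1..n} \<and> b \<in> {1..n} \<and> \<not> (mates a b \<and> (a + 1) div 2 \<le> k)"
  unfolding N_graph_def using N_graph_removed_edge_iff by simp

lemma fin_refl_graph_N_graph: "fin_refl_graph (N_graph n k)"
  unfolding fin_refl_graph_def using mates_sym by (auto simp: adj_N_graph mates_def)

section \<open>Isomorphism invariance and descending chains\<close>

lemma graph_iso_sym:
  assumes "graph_iso A B"
  shows "graph_iso B A"
proof -
  obtain f where f: "bij_betw f (verts A) (verts B)"
    "\<forall>x \<in> verts A. \<forall>y \<in> verts A. adj A x y \<longleftrightarrow> adj B (f x) (f y)"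
    using assms unfolding graph_iso_def by blast
  let ?g = "the_inv_into (verts A) f"
  have g: "bij_betw ?g (verts B) (verts A)"
    using f(1) by (rule bij_betw_the_inv_into)
  have "adj B x y \<longleftrightarrow> adj A (?g x) (?g y)" if "x \<in> verts B" "y \<in> verts B" for x y
  proof -
    have "?g x \<in> verts A" "?g y \<in> verts A" "f (?g x) = x" "f (?g y) = y"
      using that g f(1) by (auto simp: bij_betw_def f_the_inv_into_f)
    then show ?thesis
      using f(2) by metis
  qed
  then show ?thesis
    using g unfolding graph_iso_def by blast
qed

lemma hom_image_graph_iso_trans:
  assumes "graph_iso A B" "hom_image A H"
  shows "hom_image B H"
proof -
  obtain f where f: "bij_betw f (verts A) (verts B)"
    "\<forall>x \<in> verts A. \<forall>y \<in> verts A. adj A x y \<longleftrightarrow> adj B (f x) (f y)"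
    using assms(1) unfolding graph_iso_def by blast
  obtain g where g: "graph_hom g H A" "g ` verts H = verts A"
    using assms(2) unfolding hom_image_def by blast
  have gA: "g x \<in> verts A" if "x \<in> verts H" for x
    using g(2) that by blast
  have "graph_hom (f \<circ> g) H B"
    using f g gA unfolding graph_hom_def bij_betw_def by auto
  moreover have "(f \<circ> g) ` verts H = verts B"
    using f(1) g(2) unfolding bij_betw_def by (metis image_comp)
  ultimately show ?thesis
    unfolding hom_image_def by blast
qed

lemma Av_graph_iso:
  assumes "graph_iso A B"
  shows "Av A = Av B"
  unfolding Av_def using hom_image_graph_iso_trans graph_iso_sym assms by blast

lemma hom_image_card_le:
  assumes "fin_refl_graph B" "hom_image A B"
  shows "card (verts A) \<le> card (verts B)"
  using assms unfolding hom_image_def fin_refl_graph_def by (metis card_image_le)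

definition non_edges :: "graph \<Rightarrow> (nat \<times> nat) set" where
  "non_edges G = {(x, y) \<in> verts G \<times> verts G. \<not> adj G x y}"

lemma hom_image_same_card_non_edges:
  assumes B: "fin_refl_graph B" and hom: "hom_image A B" and card: "card (verts A) = card (verts B)"
  shows "card (non_edges A) \<le> card (non_edges B)"
    and "card (non_edges A) = card (non_edges B) \<Longrightarrow> hom_image B A"
proof -
  obtain f where f: "graph_hom f B A" "f ` verts B = verts A"
    using hom unfolding hom_image_def by blast
  have finB: "finite (verts B)"
    using B by (rule fin_refl_graphD)
  have inj: "inj_on f (verts B)"
    using eq_card_imp_inj_on[OF finB, of f] f(2) card by simp
  define g where "g = the_inv_into (verts B) f"
  have g: "bij_betw g (verts A) (verts B)"
    unfolding g_def using bij_betw_the_inv_into[of f] inj f(2) unfolding bij_betw_def by blast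
  have fg: "f (g a) = a" if "a \<in> verts A" for a
    using that f(2) inj unfolding g_def by (simp add: f_the_inv_into_f)
  define g2 where "g2 = map_prod g g"
  have gB: "g a \<in> verts B" if "a \<in> verts A" for a
    using g that by (rule bij_betw_apply)
  have sub: "g2 ` non_edges A \<subseteq> non_edges B"
  proof (rule image_subsetI)
    fix p assume p: "p \<in> non_edges A"
    then obtain a b where ab: "p = (a, b)"
      by (cases p)
    from p have "a \<in> verts A" "b \<in> verts A" "\<not> adj A a b"
      unfolding ab non_edges_def by auto
    moreover have "\<not> adj B (g a) (g b)"
      using calculation f(1) gB fg unfolding graph_hom_def by metis
    ultimately show "g2 p \<in> non_edges B"
      using gB unfolding ab g2_def non_edges_def by simp
  qed
  have injG: "inj_on g2 (non_edges A)"
    using g unfolding g2_def non_edges_def bij_betw_def inj_on_def by auto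
  have finNB: "finite (non_edges B)"
    using finB unfolding non_edges_def by (auto intro: finite_subset[of _ "verts B \<times> verts B"])
  show "card (non_edges A) \<le> card (non_edges B)"
    using card_inj_on_le[OF injG sub finNB] .
  assume "card (non_edges A) = card (non_edges B)"
  then have onto: "g2 ` non_edges A = non_edges B"
    using card_subset_eq[OF finNB sub] card_image[OF injG] by simp
  have "adj B (g a) (g b)" if "a \<in> verts A" "b \<in> verts A" "adj A a b" for a b
  proof (rule ccontr)
    assume "\<not> adj B (g a) (g b)"
    then have "(g a, g b) \<in> g2 ` non_edges A"
      using onto that g unfolding non_edges_def bij_betw_def by auto
    then obtain a' b' where "(a', b') \<in> non_edges A" "g a' = g a" "g b' = g b"
      unfolding g2_def by auto
    moreover have "inj_on g (verts A)"
      using g by (rule bij_betw_imp_inj_on)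
    ultimately show False
      using that unfolding non_edges_def inj_on_def by auto
  qed
  then show "hom_image B A"
    using g unfolding hom_image_def graph_hom_def bij_betw_def by blast
qed

lemma strict_hom_image_lex_less:
  assumes "fin_refl_graph B" "hom_image A B" "\<not> hom_image B A"
  shows "((card (verts A), card (non_edges A)), (card (verts B), card (non_edges B)))
    \<in> less_than <*lex*> less_than"
proof (cases "card (verts A) = card (verts B)")
  case True
  then have "card (non_edges A) < card (non_edges B)"
    using hom_image_same_card_non_edges[OF assms(1,2)] assms(3) by fastforce
  then show ?thesis
    using True by simp
next
  case False
  then show ?thesis
    using hom_image_card_le[OF assms(1,2)] by simp
qed

lemma no_strictly_descending_hom_image_chain:
  assumes "\<forall>i. fin_refl_graph (g i)"
  shows "\<not> (\<forall>i. hom_image (g (Suc i)) (g i) \<and> \<not> hom_image (g i) (g (Suc i)))"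
proof
  assume chain: "\<forall>i. hom_image (g (Suc i)) (g i) \<and> \<not> hom_image (g i) (g (Suc i))"
  define \<mu> where "\<mu> i = (card (verts (g i)), card (non_edges (g i)))" for i
  have "(\<mu> (Suc i), \<mu> i) \<in> less_than <*lex*> less_than" for i
    using strict_hom_image_lex_less assms chain unfolding \<mu>_def by blast
  then show False
    using wf_iff_no_infinite_down_chain[of "less_than <*lex*> less_than"] by blast
qed

section \<open>Graphs in which every vertex has at most one non-neighbour\<close>

definition induced :: "graph \<Rightarrow> nat set \<Rightarrow> graph" where
  "induced G V = (V, \<lambda>u v. adj G u v \<and> u \<in> V \<and> v \<in> V)"

definition clique :: "graph \<Rightarrow> nat set \<Rightarrow> bool" where
  "clique H C \<longleftrightarrow> (\<forall>x \<in> C. \<forall>y \<in> C. adj H x y)"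

definition dominating :: "graph \<Rightarrow> nat \<Rightarrow> bool" where
  "dominating G x \<longleftrightarrow> x \<in> verts G \<and> (\<forall>y \<in> verts G. adj G x y)"

definition comatching :: "graph \<Rightarrow> bool" where
  "comatching G \<longleftrightarrow>
     (\<forall>x \<in> verts G. \<forall>y \<in> verts G. \<forall>z \<in> verts G. \<not> adj G x y \<longrightarrow> \<not> adj G x z \<longrightarrow> y = z)"

lemma N_graph_shift:
  assumes "a \<in> {1..t}" "b \<in> {1..t}"
  shows "adj (N_graph (t + 2) (Suc j)) (a + 2) (b + 2) \<longleftrightarrow> adj (N_graph t j) a b"
proof -
  have "mates (a + 2) (b + 2) \<longleftrightarrow> mates a b"
    unfolding mates_def by auto
  then show ?thesis
    using assms by (auto simp: adj_N_graph)
qed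

lemma bij_betw_prepend_two:
  fixes h :: "'a \<Rightarrow> nat"
  assumes h: "bij_betw h V {1..t}" and "x \<notin> V" "y \<notin> V" "x \<noteq> y"
  shows "bij_betw (\<lambda>v. if v = x then 1 else if v = y then 2 else h v + 2)
    (insert x (insert y V)) {1..t + 2}" (is "bij_betw ?h' _ _")
proof -
  have fin: "finite V"
    using bij_betw_finite[OF h] by simp
  have "?h' ` V = (\<lambda>a. a + 2) ` h ` V"
    using assms(2,3) by (auto simp: image_image)
  also have "\<dots> = {1 + 2..t + 2}"
    using h unfolding bij_betw_def by (simp only: image_add_atLeastAtMost')
  finally have "?h' ` insert x (insert y V) = {1..t + 2}"
    using assms(4) by auto
  moreover have "card (insert x (insert y V)) = t + 2"
    using assms(2-4) fin bij_betw_same_card[OF h] by simp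
  ultimately show ?thesis
    using eq_card_imp_inj_on[of "insert x (insert y V)" ?h'] fin unfolding bij_betw_def by simp
qed

lemma graph_iso_N_graph_extend:
  assumes G: "fin_refl_graph G" and xy: "x \<in> verts G" "y \<in> verts G" "\<not> adj G x y"
    and universal: "\<forall>v \<in> verts G - {x, y}. adj G x v \<and> adj G y v"
    and iso: "graph_iso (induced G (verts G - {x, y})) (N_graph t j)"
  shows "graph_iso G (N_graph (t + 2) (Suc j))"
proof -
  define V' where "V' = verts G - {x, y}"
  obtain h where h: "bij_betw h V' {1..t}"
    and h_adj: "\<forall>u \<in> V'. \<forall>v \<in> V'. adj G u v \<longleftrightarrow> adj (N_graph t j) (h u) (h v)"
    using iso unfolding graph_iso_def induced_def V'_def by auto
  have x_ne_y: "x \<noteq> y"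
    using xy G fin_refl_graphD(3) by blast
  define h' where "h' v = (if v = x then 1 else if v = y then 2 else h v + 2)" for v
  have "verts G = insert x (insert y V')"
    using xy unfolding V'_def by auto
  then have h': "bij_betw h' (verts G) {1..t + 2}"
    using bij_betw_prepend_two[OF h _ _ x_ne_y] unfolding h'_def V'_def by simp
  have hV': "h v \<in> {1..t}" if "v \<in> V'" for v
    using h that by (rule bij_betw_apply)
  have "adj G u v \<longleftrightarrow> adj (N_graph (t + 2) (Suc j)) (h' u) (h' v)"
    if uv: "u \<in> verts G" "v \<in> verts G" for u v
  proof -
    let ?N = "N_graph (t + 2) (Suc j)"
    have h'_simps: "h' x = 1" "h' y = 2" "\<And>v. v \<in> V' \<Longrightarrow> h' v = h v + 2"
      using x_ne_y unfolding h'_def V'_def by auto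
    have N_small: "adj ?N 1 1" "adj ?N 2 2" "\<not> adj ?N 1 2" "\<not> adj ?N 2 1"
      by (auto simp: adj_N_graph mates_def)
    have N_mixed: "adj ?N a (b + 2)" "adj ?N (b + 2) a" if "a \<in> {1, 2}" "b \<in> {1..t}" for a b
      using that by (auto simp: adj_N_graph mates_def)
    have G_small: "adj G x x" "adj G y y" "\<not> adj G x y" "\<not> adj G y x"
      using xy fin_refl_graphD(2,3)[OF G] by blast+
    have G_mixed: "adj G w v" "adj G v w" if "w \<in> {x, y}" "v \<in> V'" for w v
      using that universal fin_refl_graphD(2)[OF G] unfolding V'_def by blast+
    consider "u \<in> {x, y}" "v \<in> {x, y}" | "u \<in> {x, y} \<and> v \<in> V' \<or> u \<in> V' \<and> v \<in> {x, y}"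
      | "u \<in> V'" "v \<in> V'"
      using uv unfolding V'_def by blast
    then show ?thesis
    proof cases
      case 1
      then show ?thesis
        using h'_simps N_small G_small by auto
    next
      case 2
      then show ?thesis
        using h'_simps N_mixed hV' G_mixed by auto
    next
      case 3
      then show ?thesis
        using h'_simps h_adj hV' N_graph_shift by simp
    qed
  qed
  then show ?thesis
    using h' unfolding graph_iso_def verts_N_graph by blast
qed

lemma fin_refl_graph_induced:
  assumes "fin_refl_graph G" "V \<subseteq> verts G"
  shows "fin_refl_graph (induced G V)"
  using assms finite_subset unfolding fin_refl_graph_def induced_def by auto

lemma comatching_induced:
  assumes "comatching G" "V \<subseteq> verts G"
  shows "comatching (induced G V)"
  using assms unfolding comatching_def induced_def by auto

lemma clique_iso_N_graph:
  assumes "fin_refl_graph G" "clique G (verts G)"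
  shows "graph_iso G (N_graph (card (verts G)) 0)"
proof -
  obtain h where "bij_betw h (verts G) {0..<card (verts G)}"
    using ex_bij_betw_finite_nat fin_refl_graphD(1)[OF assms(1)] by blast
  then have "bij_betw (Suc \<circ> h) (verts G) {1..card (verts G)}"
    by (rule bij_betw_trans)
      (simp add: bij_betw_def image_Suc_atLeastLessThan atLeastLessThanSuc_atLeastAtMost)
  moreover have "adj (N_graph n 0) a b \<longleftrightarrow> a \<in> {1..n} \<and> b \<in> {1..n}" for n a b
    by (auto simp: adj_N_graph)
  ultimately show ?thesis
    using assms(2) unfolding graph_iso_def bij_betw_def clique_def
    by (intro exI[of _ "Suc \<circ> h"]) (auto simp del: comp_apply)
qed

lemma comatching_iso_N_graph:
  assumes "fin_refl_graph G" "comatching G"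
  shows "\<exists>j. 2 * j \<le> card (verts G) \<and> graph_iso G (N_graph (card (verts G)) j)"
  using assms
proof (induction "card (verts G)" arbitrary: G rule: less_induct)
  case less
  have fin: "finite (verts G)"
    using less.prems(1) by (rule fin_refl_graphD)
  show ?case
  proof (cases "clique G (verts G)")
    case True
    then show ?thesis
      using clique_iso_N_graph[OF less.prems(1)] unfolding clique_def by (intro exI[of _ 0]) simp
  next
    case False
    then obtain x y where xy: "x \<in> verts G" "y \<in> verts G" "\<not> adj G x y"
      unfolding clique_def by blast
    define G' where "G' = induced G (verts G - {x, y})"
    have x_ne_y: "x \<noteq> y"
      using xy less.prems(1) fin_refl_graphD(3) by blast
    have card_G: "card (verts G) = card (verts G') + 2"
      using xy x_ne_y fin card_mono[OF fin, of "{x, y}"] unfolding G'_def induced_def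
      by (simp add: card_Diff_subset)
    have "\<not> adj G y x"
      using xy fin_refl_graphD(2)[OF less.prems(1)] by blast
    then have universal: "\<forall>v \<in> verts G - {x, y}. adj G x v \<and> adj G y v"
      using xy less.prems(2) unfolding comatching_def by blast
    obtain j where j: "2 * j \<le> card (verts G')" "graph_iso G' (N_graph (card (verts G')) j)"
      using less.hyps[of G'] card_G less.prems
        fin_refl_graph_induced[of G "verts G - {x, y}"] comatching_induced[of G "verts G - {x, y}"]
      unfolding G'_def by auto
    have "graph_iso G (N_graph (card (verts G)) (Suc j))"
      using graph_iso_N_graph_extend[OF less.prems(1) xy universal] j(2) card_G
      unfolding G'_def induced_def by simp
    then show ?thesis
      using j(1) card_G by (intro exI[of _ "Suc j"]) simp
  qed
qed

lemma graph_hom_N_graph_non_adj_mates: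
  assumes "graph_hom f (N_graph n k) G" "a \<in> {1..n}" "b \<in> {1..n}" "\<not> adj G (f a) (f b)"
  shows "mates a b"
proof (rule ccontr)
  assume "\<not> mates a b"
  then have "adj (N_graph n k) a b"
    using assms(2,3) by (simp add: adj_N_graph)
  then show False
    using assms unfolding graph_hom_def by simp
qed

lemma hom_image_N_graph_comatching:
  assumes "hom_image G (N_graph n k)"
  shows "comatching G"
proof -
  obtain f where f: "graph_hom f (N_graph n k) G" "f ` {1..n} = verts G"
    using assms unfolding hom_image_def by auto
  have "y = z" if xyz: "x \<in> verts G" "y \<in> verts G" "z \<in> verts G" and "\<not> adj G x y" "\<not> adj G x z"
    for x y z
  proof -
    obtain a b c where abc: "a \<in> {1..n}" "b \<in> {1..n}" "c \<in> {1..n}" "x = f a" "y = f b" "z = f c"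
      using xyz unfolding f(2)[symmetric] by blast
    then have "mates a b" "mates a c"
      using that(4,5) graph_hom_N_graph_non_adj_mates[OF f(1)] by auto
    then show "y = z"
      using abc mates_unique by metis
  qed
  then show ?thesis
    unfolding comatching_def by blast
qed

text \<open>Two preimages of one vertex would both be mates of the preimage of any non-neighbour.\<close>

lemma hom_image_N_graph_dominating:
  assumes "hom_image G (N_graph n k)" "card (verts G) < n"
  shows "\<exists>x. dominating G x"
proof -
  obtain f where f: "graph_hom f (N_graph n k) G" "f ` {1..n} = verts G"
    using assms unfolding hom_image_def by auto
  have "\<not> inj_on f {1..n}"
    using assms(2) f(2) card_image by fastforce
  then obtain a b where ab: "a \<in> {1..n}" "b \<in> {1..n}" "a \<noteq> b" "f a = f b"
    unfolding inj_on_def by blast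
  have "adj G (f a) (f c)" if "c \<in> {1..n}" for c
  proof (rule ccontr)
    assume non_adj: "\<not> adj G (f a) (f c)"
    then have "mates c a"
      using graph_hom_N_graph_non_adj_mates[OF f(1) ab(1) that] mates_sym by blast
    moreover have "mates c b"
      using graph_hom_N_graph_non_adj_mates[OF f(1) ab(2) that] non_adj ab(4) mates_sym by auto
    ultimately show False
      using ab(3) mates_unique by blast
  qed
  then have "dominating G (f a)"
    using ab(1) unfolding dominating_def f(2)[symmetric] by blast
  then show ?thesis ..
qed

lemma N_graph_perfect_no_dominating: "\<not> dominating (N_graph (2 * j) j) a"
proof
  assume dom: "dominating (N_graph (2 * j) j) a"
  define b where "b = (if even a then a - 1 else a + 1)"
  have "a \<in> {1..2 * j}"
    using dom unfolding dominating_def by simp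
  then have "b \<in> {1..2 * j} \<and> mates a b \<and> (a + 1) div 2 \<le> j"
  proof (cases "even a")
    case True
    then obtain c where "a = 2 * c"
      by blast
    then show ?thesis
      using True \<open>a \<in> {1..2 * j}\<close> unfolding b_def mates_def by auto
  next
    case False
    then obtain c where "a = 2 * c + 1"
      by (blast elim: oddE)
    then show ?thesis
      using False \<open>a \<in> {1..2 * j}\<close> unfolding b_def mates_def by auto presburger
  qed
  then show False
    using dom unfolding dominating_def by (auto simp: adj_N_graph)
qed

lemma graph_iso_dominating:
  assumes "graph_iso A B" "dominating A x"
  shows "\<exists>y. dominating B y"
proof -
  obtain f where f: "bij_betw f (verts A) (verts B)"
    "\<forall>x \<in> verts A. \<forall>y \<in> verts A. adj A x y \<longleftrightarrow> adj B (f x) (f y)"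
    using assms(1) unfolding graph_iso_def by blast
  have "adj B (f x) y" if "y \<in> verts B" for y
  proof -
    obtain z where "z \<in> verts A" "y = f z"
      using f(1) \<open>y \<in> verts B\<close> unfolding bij_betw_def by blast
    then show ?thesis
      using f(2) assms(2) unfolding dominating_def by blast
  qed
  then have "dominating B (f x)"
    using assms(2) f(1) unfolding dominating_def by (simp add: bij_betw_apply)
  then show ?thesis ..
qed

lemma comatching_dominating_iso_N_graph:
  assumes "fin_refl_graph G" "comatching G" "dominating G x"
  shows "\<exists>n k. 2 * k < n \<and> graph_iso G (N_graph n k)"
proof -
  obtain j where j: "2 * j \<le> card (verts G)" "graph_iso G (N_graph (card (verts G)) j)"
    using comatching_iso_N_graph[OF assms(1,2)] by blast
  have "2 * j \<noteq> card (verts G)"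
    using graph_iso_dominating[OF j(2) assms(3)] N_graph_perfect_no_dominating by metis
  then show ?thesis
    using j by (intro exI conjI) auto
qed

lemma hom_image_N_graph_perfect:
  assumes "fin_refl_graph G" "hom_image G (N_graph (2 * m) m)" "card (verts G) < 2 * m"
  shows "\<exists>n k. 2 * k < n \<and> graph_iso G (N_graph n k)"
  using comatching_dominating_iso_N_graph[OF assms(1) hom_image_N_graph_comatching[OF assms(2)]]
    hom_image_N_graph_dominating[OF assms(2,3)] by blast

lemma N_graph_perfect_antichain:
  assumes "m \<noteq> m'"
  shows "\<not> hom_image (N_graph (2 * m) m) (N_graph (2 * m') m')"
proof
  assume hom: "hom_image (N_graph (2 * m) m) (N_graph (2 * m') m')"
  show False
  proof (cases "m < m'")
    case True
    then show False
      using hom_image_N_graph_dominating[OF hom] N_graph_perfect_no_dominating by auto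
  next
    case False
    then show False
      using assms hom_image_card_le[OF fin_refl_graph_N_graph hom] by simp
  qed
qed

section \<open>Surjections between finite sets and Dickson's lemma\<close>

lemma ex_surj_card_le:
  assumes "finite A" "finite B" "card B \<le> card A" "B \<noteq> {}"
  shows "\<exists>f. f ` A = B"
proof -
  have "B \<lesssim> A"
    using assms(1-3) by (simp add: lepoll_iff_card_le)
  then obtain g where g: "B \<subseteq> g ` A"
    unfolding lepoll_iff by blast
  obtain b where b: "b \<in> B"
    using assms(4) by blast
  have "(\<lambda>x. if g x \<in> B then g x else b) ` A = B"
    using g b by auto
  then show ?thesis
    by blast
qed

lemma ex_surj_extending_inv:
  assumes "finite V" "inj_on p I" "p ` I \<subseteq> V" "finite J" "J \<noteq> {}" "card J \<le> card V - card I"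
  shows "\<exists>f. f ` (V - p ` I) = J \<and> (\<forall>a \<in> I. f (p a) = a)"
proof -
  have "card (V - p ` I) = card V - card I"
    using assms(1-3) card_image[OF assms(2)] by (simp add: card_Diff_subset finite_subset)
  then obtain \<sigma> where \<sigma>: "\<sigma> ` (V - p ` I) = J"
    using ex_surj_card_le[of "V - p ` I" J] assms(1,4-6) by auto
  define f where "f v = (if v \<in> p ` I then the_inv_into I p v else \<sigma> v)" for v
  have "f ` (V - p ` I) = J"
    using \<sigma> unfolding f_def by auto
  moreover have "\<forall>a \<in> I. f (p a) = a"
    using the_inv_into_f_f[OF assms(2)] unfolding f_def by auto
  ultimately show ?thesis
    by blast
qed

lemma ex_fibrewise_surj:
  assumes fin: "finite R1" "finite R2"
    and types: "t1 ` R1 = t2 ` R2"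
    and counts: "\<And>T. card {v \<in> R1. t1 v = T} \<le> card {v \<in> R2. t2 v = T}"
  shows "\<exists>\<phi>. \<phi> ` R2 = R1 \<and> (\<forall>v \<in> R2. t1 (\<phi> v) = t2 v)"
proof -
  have "\<forall>T \<in> t2 ` R2. \<exists>\<sigma>. \<sigma> ` {v \<in> R2. t2 v = T} = {v \<in> R1. t1 v = T}"
  proof
    fix T assume "T \<in> t2 ` R2"
    then have "{v \<in> R1. t1 v = T} \<noteq> {}"
      using types by force
    then show "\<exists>\<sigma>. \<sigma> ` {v \<in> R2. t2 v = T} = {v \<in> R1. t1 v = T}"
      using ex_surj_card_le[of "{v \<in> R2. t2 v = T}" "{v \<in> R1. t1 v = T}"] fin counts by simp
  qed
  from bchoice[OF this] obtain \<sigma>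
    where \<sigma>: "\<forall>T \<in> t2 ` R2. \<sigma> T ` {v \<in> R2. t2 v = T} = {v \<in> R1. t1 v = T}"
    by blast
  define \<phi> where "\<phi> v = \<sigma> (t2 v) v" for v
  have \<phi>: "\<phi> v \<in> R1 \<and> t1 (\<phi> v) = t2 v" if "v \<in> R2" for v
  proof -
    have "\<phi> v \<in> \<sigma> (t2 v) ` {u \<in> R2. t2 u = t2 v}"
      using that unfolding \<phi>_def by simp
    then show ?thesis
      using \<sigma> that by simp
  qed
  have "R1 \<subseteq> \<phi> ` R2"
  proof
    fix w assume "w \<in> R1"
    then have "t1 w \<in> t2 ` R2" "w \<in> {v \<in> R1. t1 v = t1 w}"
      using types by auto
    then have "w \<in> \<sigma> (t1 w) ` {v \<in> R2. t2 v = t1 w}"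
      using \<sigma>[rule_format, of "t1 w"] by simp
    then obtain v where "v \<in> R2" "t2 v = t1 w" "w = \<sigma> (t1 w) v"
      by blast
    then show "w \<in> \<phi> ` R2"
      unfolding \<phi>_def by force
  qed
  then show ?thesis
    using \<phi> by blast
qed

lemma infinite_imp_not_strictly_decreasing:
  fixes c :: "nat \<Rightarrow> nat"
  assumes "infinite Y"
  shows "\<exists>x \<in> Y. \<exists>y \<in> Y. x < y \<and> c x \<le> c y"
proof -
  obtain y0 where "y0 \<in> Y"
    using assms by (metis finite.emptyI ex_in_conv)
  then obtain m where m: "m \<in> Y" "\<And>y. y \<in> Y \<Longrightarrow> c m \<le> c y"
    using ex_has_least_nat[of "\<lambda>y. y \<in> Y" y0 c] by blast
  obtain y where "y \<in> Y" "m < y"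
    using assms unfolding infinite_nat_iff_unbounded by blast
  then show ?thesis
    using m by blast
qed

text \<open>Dickson's lemma, by induction on \<open>D\<close> with Ramsey's theorem for pairs.\<close>

lemma ex_infinite_subset_pointwise_mono:
  fixes c :: "nat \<Rightarrow> 'a \<Rightarrow> nat"
  assumes "finite D" "infinite Z"
  shows "\<exists>Y \<subseteq> Z. infinite Y \<and> (\<forall>i \<in> Y. \<forall>j \<in> Y. i < j \<longrightarrow> (\<forall>d \<in> D. c i d \<le> c j d))"
  using assms
proof (induction D arbitrary: Z rule: finite_induct)
  case empty
  then show ?case
    by blast
next
  case (insert d D)
  obtain Y where Y: "Y \<subseteq> Z" "infinite Y" "\<forall>i \<in> Y. \<forall>j \<in> Y. i < j \<longrightarrow> (\<forall>d \<in> D. c i d \<le> c j d)"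
    using insert.IH insert.prems by blast
  define colour where "colour X = (if c (Min X) d \<le> c (Max X) d then 0 else 1 :: nat)" for X :: "nat set"
  have "\<forall>x \<in> Y. \<forall>y \<in> Y. x \<noteq> y \<longrightarrow> colour {x, y} < 2"
    unfolding colour_def by simp
  from Ramsey2[OF Y(2) this] obtain Y' t where Y': "Y' \<subseteq> Y" "infinite Y'"
    "\<forall>x \<in> Y'. \<forall>y \<in> Y'. x \<noteq> y \<longrightarrow> colour {x, y} = t"
    by blast
  have colour_Y': "colour {x, y} = t" if "x \<in> Y'" "y \<in> Y'" "x < y" for x y
    using Y'(3) that by simp
  have colour_pair: "colour {x, y} = 0 \<longleftrightarrow> c x d \<le> c y d" if "x < y" for x y
    using that unfolding colour_def by (simp add: min_def max_def)
  have "t = 0"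
  proof (rule ccontr)
    assume "t \<noteq> 0"
    obtain x y where xy: "x \<in> Y'" "y \<in> Y'" "x < y" "c x d \<le> c y d"
      using infinite_imp_not_strictly_decreasing[OF Y'(2), of "\<lambda>i. c i d"] by blast
    then have "colour {x, y} = 0"
      using colour_pair by simp
    then show False
      using colour_Y'[OF xy(1-3)] \<open>t \<noteq> 0\<close> by simp
  qed
  have "\<forall>d' \<in> insert d D. c i d' \<le> c j d'" if "i \<in> Y'" "j \<in> Y'" "i < j" for i j
  proof -
    have "c i d \<le> c j d"
      using colour_Y'[OF that] colour_pair[OF that(3)] \<open>t = 0\<close> by simp
    moreover have "\<forall>d' \<in> D. c i d' \<le> c j d'"
      using Y(3) Y'(1) that by blast
    ultimately show ?thesis
      by blast
  qed
  then have "\<forall>i \<in> Y'. \<forall>j \<in> Y'. i < j \<longrightarrow> (\<forall>d' \<in> insert d D. c i d' \<le> c j d')"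
    by blast
  moreover have "Y' \<subseteq> Z"
    using Y(1) Y'(1) by blast
  ultimately show ?case
    using Y'(2) by (intro exI[of _ Y']) simp
qed

lemma ex_pair_same_code_pointwise_mono:
  fixes code :: "nat \<Rightarrow> 'b" and c :: "nat \<Rightarrow> 'a \<Rightarrow> nat"
  assumes "finite (range code)" "finite D"
  shows "\<exists>i j. i < j \<and> code i = code j \<and> (\<forall>d \<in> D. c i d \<le> c j d)"
proof -
  obtain y where y: "infinite (code -` {y})"
    using inf_img_fin_dom[OF assms(1) infinite_UNIV_nat] by blast
  obtain Y where Y: "Y \<subseteq> code -` {y}" "infinite Y"
    "\<forall>i \<in> Y. \<forall>j \<in> Y. i < j \<longrightarrow> (\<forall>d \<in> D. c i d \<le> c j d)"
    using ex_infinite_subset_pointwise_mono[OF assms(2) y, of c] by blast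
  obtain i j where "i \<in> Y" "j \<in> Y" "i < j"
    using infinite_imp_not_strictly_decreasing[OF Y(2), of id] by auto
  then show ?thesis
    using Y(1,3) by (intro exI[of _ i] exI[of _ j]) auto
qed

section \<open>Graphs avoiding \<open>N_graph n k\<close> are cliques outside a bounded set\<close>

lemma ex_non_adjacent_pairs:
  assumes H: "fin_refl_graph H"
    and no_cover: "\<forall>S \<subseteq> verts H. card S < n \<longrightarrow> \<not> clique H (verts H - S)"
    and "2 * j \<le> n"
  shows "\<exists>p. inj_on p {1..2 * j} \<and> p ` {1..2 * j} \<subseteq> verts H
    \<and> (\<forall>i \<in> {1..j}. \<not> adj H (p (2 * i - 1)) (p (2 * i)))"
  using assms(3)
proof (induction j)
  case 0
  then show ?case
    by simp
next
  case (Suc j)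
  then obtain p where p: "inj_on p {1..2 * j}" "p ` {1..2 * j} \<subseteq> verts H"
    "\<forall>i \<in> {1..j}. \<not> adj H (p (2 * i - 1)) (p (2 * i))"
    by auto
  have "card (p ` {1..2 * j}) < n"
    using card_image_le[of "{1..2 * j}" p] Suc.prems by simp
  then obtain x y where xy: "x \<in> verts H - p ` {1..2 * j}" "y \<in> verts H - p ` {1..2 * j}"
    "\<not> adj H x y"
    using no_cover[rule_format, OF p(2)] unfolding clique_def by blast
  have x_ne_y: "x \<noteq> y"
    using xy fin_refl_graphD(3)[OF H] by blast
  define p' where "p' = p(2 * j + 1 := x, 2 * j + 2 := y)"
  have dom: "{1..2 * Suc j} = insert (2 * j + 1) (insert (2 * j + 2) {1..2 * j})"
    by auto
  have p'_old: "p' a = p a" if "a \<in> {1..2 * j}" for a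
    using that unfolding p'_def by auto
  then have img: "p' ` {1..2 * j} = p ` {1..2 * j}"
    by (rule image_cong[OF refl])
  have "inj_on p' {1..2 * Suc j}"
    using p(1) p'_old xy x_ne_y img inj_on_cong[of "{1..2 * j}" p' p] unfolding dom
    by (auto simp: p'_def)
  moreover have "p' ` {1..2 * Suc j} \<subseteq> verts H"
    using p(2) xy img unfolding dom p'_def by auto
  moreover have "\<not> adj H (p' (2 * i - 1)) (p' (2 * i))" if "i \<in> {1..Suc j}" for i
  proof (cases "i = Suc j")
    case True
    then show ?thesis
      using xy(3) unfolding p'_def by simp
  next
    case False
    then have "i \<in> {1..j}"
      using that by auto
    moreover have "2 * i - 1 \<in> {1..2 * j}" "2 * i \<in> {1..2 * j}"
      using \<open>i \<in> {1..j}\<close> by auto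
    ultimately show ?thesis
      using p(3) p'_old by simp
  qed
  ultimately show ?case
    by blast
qed

lemma hom_image_N_graph_of_non_adjacent_pairs:
  assumes H: "fin_refl_graph H" and kn: "2 * k < n" and n: "n \<le> card (verts H)"
    and p: "inj_on p {1..2 * k}" "p ` {1..2 * k} \<subseteq> verts H"
      "\<forall>i \<in> {1..k}. \<not> adj H (p (2 * i - 1)) (p (2 * i))"
  shows "hom_image (N_graph n k) H"
proof -
  define S where "S = p ` {1..2 * k}"
  have "card {2 * k + 1..n} \<le> card (verts H) - card {1..2 * k}"
    using n by simp
  then obtain f where f_rest_onto: "f ` (verts H - S) = {2 * k + 1..n}"
    and f_p: "\<And>a. a \<in> {1..2 * k} \<Longrightarrow> f (p a) = a"
    using ex_surj_extending_inv[OF fin_refl_graphD(1)[OF H] p(1,2), of "{2 * k + 1..n}"] kn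
    unfolding S_def by auto
  have f_S: "f v \<in> {1..2 * k} \<and> p (f v) = v" if "v \<in> S" for v
    using that f_p unfolding S_def by auto
  have f_rest: "f v \<in> {2 * k + 1..n}" if "v \<in> verts H - S" for v
    using that f_rest_onto by auto
  have f_onto: "f ` verts H = {1..n}"
  proof
    show "f ` verts H \<subseteq> {1..n}"
      using f_S f_rest kn by force
    have "{1..2 * k} \<subseteq> f ` verts H"
      using f_p p(2) by force
    moreover have "{2 * k + 1..n} \<subseteq> f ` verts H"
      using f_rest_onto by auto
    moreover have "{1..n} \<subseteq> {1..2 * k} \<union> {2 * k + 1..n}"
      by auto
    ultimately show "{1..n} \<subseteq> f ` verts H"
      by blast
  qed
  have "adj (N_graph n k) (f u) (f v)" if uv: "u \<in> verts H" "v \<in> verts H" "adj H u v" for u v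
  proof (rule ccontr)
    assume "\<not> adj (N_graph n k) (f u) (f v)"
    moreover have "f u \<in> {1..n}" "f v \<in> {1..n}"
      using f_onto uv(1,2) by auto
    ultimately have "mates (f u) (f v) \<and> (f u + 1) div 2 \<le> k"
      by (simp add: adj_N_graph)
    then obtain i where i: "i \<in> {1..k}" "{f u, f v} = {2 * i - 1, 2 * i}"
      unfolding N_graph_removed_edge_iff[symmetric] by blast
    then have "f u \<le> 2 * k" "f v \<le> 2 * k"
      by (auto simp: doubleton_eq_iff)
    then have "u \<in> S" "v \<in> S"
      using f_rest uv(1,2) by force+
    then have "p (f u) = u" "p (f v) = v"
      using f_S by auto
    moreover have "adj H v u"
      using uv(3) fin_refl_graphD(2)[OF H] by blast
    ultimately show False
      using i p(3) uv(3) by (auto simp: doubleton_eq_iff)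
  qed
  then have "graph_hom f H (N_graph n k)"
    using f_onto unfolding graph_hom_def by auto
  then show ?thesis
    using f_onto unfolding hom_image_def by auto
qed

lemma Av_N_graph_clique_cover:
  assumes H: "fin_refl_graph H" and kn: "2 * k < n" and not_image: "\<not> hom_image (N_graph n k) H"
  shows "\<exists>S \<subseteq> verts H. card S < n \<and> clique H (verts H - S)"
proof (rule ccontr)
  assume no_cover: "\<not> ?thesis"
  moreover have "clique H (verts H - verts H)"
    unfolding clique_def by simp
  ultimately have "n \<le> card (verts H)"
    using not_le by blast
  moreover obtain p where "inj_on p {1..2 * k}" "p ` {1..2 * k} \<subseteq> verts H"
    "\<forall>i \<in> {1..k}. \<not> adj H (p (2 * i - 1)) (p (2 * i))"
    using ex_non_adjacent_pairs[OF H _, of n k] no_cover kn by auto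
  ultimately show False
    using hom_image_N_graph_of_non_adjacent_pairs[OF H kn] not_image by blast
qed

definition clique_modulo :: "graph \<Rightarrow> nat \<Rightarrow> (nat \<Rightarrow> nat) \<Rightarrow> bool" where
  "clique_modulo H s e \<longleftrightarrow>
     inj_on e {..<s} \<and> e ` {..<s} \<subseteq> verts H \<and> clique H (verts H - e ` {..<s})"

definition core_nbhd :: "graph \<Rightarrow> nat \<Rightarrow> (nat \<Rightarrow> nat) \<Rightarrow> nat \<Rightarrow> nat set" where
  "core_nbhd H s e v = {a. a < s \<and> adj H v (e a)}"

lemma ex_core_nbhd_preserving_surj:
  assumes A: "fin_refl_graph HA" and B: "fin_refl_graph HB"
    and eA: "clique_modulo HA s ea" and eB: "clique_modulo HB s eb"
    and types: "core_nbhd HA s ea ` (verts HA - ea ` {..<s}) = core_nbhd HB s eb ` (verts HB - eb ` {..<s})"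
    and counts: "\<And>T. card {v \<in> verts HA - ea ` {..<s}. core_nbhd HA s ea v = T}
                  \<le> card {v \<in> verts HB - eb ` {..<s}. core_nbhd HB s eb v = T}"
  shows "\<exists>f. f ` verts HB = verts HA \<and> (\<forall>a < s. f (eb a) = ea a)
    \<and> (\<forall>v \<in> verts HB - eb ` {..<s}. f v \<in> verts HA - ea ` {..<s}
          \<and> core_nbhd HA s ea (f v) = core_nbhd HB s eb v)"
proof -
  define RA where "RA = verts HA - ea ` {..<s}"
  define RB where "RB = verts HB - eb ` {..<s}"
  obtain \<phi> where \<phi>: "\<phi> ` RB = RA" "\<forall>v \<in> RB. core_nbhd HA s ea (\<phi> v) = core_nbhd HB s eb v"
    using ex_fibrewise_surj[OF _ _ types counts] fin_refl_graphD(1)[OF A] fin_refl_graphD(1)[OF B]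
    unfolding RA_def RB_def by auto
  define f where "f v = (if v \<in> eb ` {..<s} then ea (the_inv_into {..<s} eb v) else \<phi> v)" for v
  have f_core: "f (eb a) = ea a" if "a < s" for a
    using that eB the_inv_into_f_f[of eb "{..<s}" a] unfolding f_def clique_modulo_def by auto
  have f_rest: "f v = \<phi> v" if "v \<in> RB" for v
    using that unfolding f_def RB_def by auto
  have verts_A: "verts HA = ea ` {..<s} \<union> RA" and verts_B: "verts HB = eb ` {..<s} \<union> RB"
    using eA eB unfolding RA_def RB_def clique_modulo_def by auto
  have "f ` verts HB = verts HA"
    unfolding verts_A verts_B image_Un \<phi>(1)[symmetric] using f_core f_rest
    by (auto simp: image_image intro!: image_cong)
  moreover have "\<forall>v \<in> RB. f v \<in> RA \<and> core_nbhd HA s ea (f v) = core_nbhd HB s eb v"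
    using \<phi> f_rest by auto
  ultimately show ?thesis
    using f_core unfolding RA_def RB_def by blast
qed

lemma hom_image_clique_modulo:
  assumes A: "fin_refl_graph HA" and B: "fin_refl_graph HB"
    and eA: "clique_modulo HA s ea" and eB: "clique_modulo HB s eb"
    and core: "\<forall>a < s. \<forall>b < s. adj HA (ea a) (ea b) \<longleftrightarrow> adj HB (eb a) (eb b)"
    and types: "core_nbhd HA s ea ` (verts HA - ea ` {..<s}) = core_nbhd HB s eb ` (verts HB - eb ` {..<s})"
    and counts: "\<And>T. card {v \<in> verts HA - ea ` {..<s}. core_nbhd HA s ea v = T}
                  \<le> card {v \<in> verts HB - eb ` {..<s}. core_nbhd HB s eb v = T}"
  shows "hom_image HA HB"
proof -
  define RA where "RA = verts HA - ea ` {..<s}"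
  define RB where "RB = verts HB - eb ` {..<s}"
  obtain f where f_onto: "f ` verts HB = verts HA" and f_core: "\<And>a. a < s \<Longrightarrow> f (eb a) = ea a"
    and f_rest: "\<And>v. v \<in> RB \<Longrightarrow> f v \<in> RA \<and> core_nbhd HA s ea (f v) = core_nbhd HB s eb v"
    using ex_core_nbhd_preserving_surj[OF A B eA eB types counts] unfolding RA_def RB_def by blast
  have verts_B: "verts HB = eb ` {..<s} \<union> RB"
    using eB unfolding RB_def clique_modulo_def by auto
  have core_rest: "adj HA (f v) (ea a)" if "v \<in> RB" "a < s" "adj HB v (eb a)" for v a
  proof -
    have "a \<in> core_nbhd HB s eb v"
      using that unfolding core_nbhd_def by simp
    then show ?thesis
      using f_rest[OF that(1)] unfolding core_nbhd_def by auto
  qed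
  have sym_A: "adj HA x y \<Longrightarrow> adj HA y x" and sym_B: "adj HB x y \<Longrightarrow> adj HB y x" for x y
    using fin_refl_graphD(2)[OF A] fin_refl_graphD(2)[OF B] by blast+
  have "adj HA (f u) (f v)" if uv: "u \<in> verts HB" "v \<in> verts HB" "adj HB u v" for u v
  proof (cases "u \<in> RB"; cases "v \<in> RB")
    assume "u \<in> RB" "v \<in> RB"
    then show ?thesis
      using eA f_rest unfolding clique_modulo_def clique_def RA_def by blast
  next
    assume "u \<in> RB" "v \<notin> RB"
    then obtain b where "b < s" "v = eb b"
      using uv(2) verts_B by auto
    then show ?thesis
      using core_rest \<open>u \<in> RB\<close> uv(3) f_core by simp
  next
    assume "u \<notin> RB" "v \<in> RB"
    then obtain a where "a < s" "u = eb a"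
      using uv(1) verts_B by auto
    then show ?thesis
      using core_rest \<open>v \<in> RB\<close> sym_A sym_B uv(3) f_core by simp
  next
    assume "u \<notin> RB" "v \<notin> RB"
    then obtain a b where "a < s" "u = eb a" "b < s" "v = eb b"
      using uv(1,2) verts_B by auto
    then show ?thesis
      using core uv(3) f_core by simp
  qed
  then have "graph_hom f HB HA"
    using f_onto unfolding graph_hom_def by auto
  then show ?thesis
    using f_onto unfolding hom_image_def by auto
qed

lemma clique_modulo_of_clique:
  assumes "fin_refl_graph H" "S \<subseteq> verts H" "clique H (verts H - S)"
  shows "\<exists>e. clique_modulo H (card S) e"
proof -
  have "finite S"
    using assms(1,2) fin_refl_graphD(1) finite_subset by blast
  then obtain e where "bij_betw e {0..<card S} S"
    using ex_bij_betw_nat_finite by blast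
  then have "inj_on e {..<card S}" "e ` {..<card S} = S"
    unfolding bij_betw_def by (auto simp: atLeast0LessThan)
  then show ?thesis
    using assms unfolding clique_modulo_def by (intro exI[of _ e]) auto
qed

lemma Av_N_graph_clique_modulo:
  assumes "2 * k < n" "H \<in> Av (N_graph n k)"
  shows "\<exists>s e. s < n \<and> clique_modulo H s e"
proof -
  have H: "fin_refl_graph H" "\<not> hom_image (N_graph n k) H"
    using assms(2) unfolding Av_def by auto
  then obtain S where "S \<subseteq> verts H" "card S < n" "clique H (verts H - S)"
    using Av_N_graph_clique_cover[OF H(1) assms(1)] by blast
  then show ?thesis
    using clique_modulo_of_clique[OF H(1)] by blast
qed

lemma Av_N_graph_good_pair:
  fixes g :: "nat \<Rightarrow> graph"
  assumes kn: "2 * k < n" and g: "\<forall>i. g i \<in> Av (N_graph n k)"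
  shows "\<exists>i j. i < j \<and> hom_image (g i) (g j)"
proof -
  have fin: "fin_refl_graph (g i)" for i
    using g unfolding Av_def by auto
  have "\<forall>i. \<exists>s e. s < n \<and> clique_modulo (g i) s e"
    using Av_N_graph_clique_modulo[OF kn] g by blast
  then obtain s :: "nat \<Rightarrow> nat" and e :: "nat \<Rightarrow> nat \<Rightarrow> nat"
    where se: "\<And>i. s i < n" "\<And>i. clique_modulo (g i) (s i) (e i)"
    by metis
  define R where "R i = verts (g i) - e i ` {..<s i}" for i
  define ty where "ty i = core_nbhd (g i) (s i) (e i)" for i
  define E where "E i = {(a, b). a < s i \<and> b < s i \<and> adj (g i) (e i a) (e i b)}" for i
  define code where "code i = (s i, E i, ty i ` R i)" for i
  have ty_sub: "ty i v \<subseteq> {..<n}" for i v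
    using se(1)[of i] unfolding ty_def core_nbhd_def by auto
  have "range code \<subseteq> {..<n} \<times> Pow ({..<n} \<times> {..<n}) \<times> Pow (Pow {..<n})"
  proof (rule image_subsetI)
    fix i
    have "E i \<subseteq> {..<n} \<times> {..<n}"
      using se(1)[of i] unfolding E_def by auto
    moreover have "ty i ` R i \<subseteq> Pow {..<n}"
      using ty_sub by auto
    ultimately show "code i \<in> {..<n} \<times> Pow ({..<n} \<times> {..<n}) \<times> Pow (Pow {..<n})"
      using se(1)[of i] unfolding code_def by simp
  qed
  then have "finite (range code)"
    by (rule finite_subset) auto
  then obtain i j where ij: "i < j" "code i = code j"
    and counts: "\<forall>T \<in> Pow {..<n}. card {v \<in> R i. ty i v = T} \<le> card {v \<in> R j. ty j v = T}"
    using ex_pair_same_code_pointwise_mono[of code "Pow {..<n}" "\<lambda>i T. card {v \<in> R i. ty i v = T}"]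
    by auto
  then have same_code: "s j = s i" "E j = E i" "ty j ` R j = ty i ` R i"
    unfolding code_def by simp_all
  have "card {v \<in> R i. ty i v = T} \<le> card {v \<in> R j. ty j v = T}" for T
  proof (cases "T \<in> Pow {..<n}")
    case True
    then show ?thesis
      using counts by blast
  next
    case False
    then have "{v \<in> R i. ty i v = T} = {}"
      using ty_sub by auto
    then show ?thesis
      by (simp only: card.empty le0)
  qed
  moreover have "\<forall>a < s i. \<forall>b < s i. adj (g i) (e i a) (e i b) \<longleftrightarrow> adj (g j) (e j a) (e j b)"
    using same_code(1,2) unfolding E_def by (auto simp: set_eq_iff)
  ultimately have "hom_image (g i) (g j)"
    using hom_image_clique_modulo[of "g i" "g j" "s i" "e i" "e j"] fin se(2)[of i]
      se(2)[of j, unfolded same_code(1)] same_code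
    unfolding R_def ty_def by simp
  then show ?thesis
    using ij(1) by blast
qed

lemma wqo_hom_Av_N_graph:
  assumes "2 * k < n"
  shows "wqo_hom (Av (N_graph n k))"
proof -
  have "fin_refl_graph H" if "H \<in> Av (N_graph n k)" for H
    using that unfolding Av_def by simp
  then show ?thesis
    using no_strictly_descending_hom_image_chain Av_N_graph_good_pair[OF assms]
    unfolding wqo_hom_def by (metis less_not_refl)
qed

lemma Av_infinite_antichain:
  assumes "fin_refl_graph G" "\<nexists>n k. 2 * k < n \<and> graph_iso G (N_graph n k)"
  shows "\<exists>g :: nat \<Rightarrow> graph. (\<forall>i. g i \<in> Av G) \<and> (\<forall>i j. i \<noteq> j \<longrightarrow> \<not> hom_image (g i) (g j))"
proof -
  define m where "m i = i + card (verts G) + 1" for i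
  define g where "g i = N_graph (2 * m i) (m i)" for i
  have "g i \<in> Av G" for i
    using hom_image_N_graph_perfect[OF assms(1), of "m i"] assms(2) fin_refl_graph_N_graph
    unfolding Av_def g_def m_def by auto
  moreover have "\<not> hom_image (g i) (g j)" if "i \<noteq> j" for i j
    using N_graph_perfect_antichain[of "m i" "m j"] that unfolding g_def m_def by simp
  ultimately show ?thesis
    by (intro exI[of _ g]) auto
qed

theorem theorem3p4:
  assumes "fin_refl_graph G"
  shows "wqo_hom (Av G) \<longleftrightarrow> (\<exists>n k. 2 * k < n \<and> graph_iso G (N_graph n k))"
proof
  assume wqo: "wqo_hom (Av G)"
  show "\<exists>n k. 2 * k < n \<and> graph_iso G (N_graph n k)"
  proof (rule ccontr)
    assume "\<nexists>n k. 2 * k < n \<and> graph_iso G (N_graph n k)"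
    then show False
      using wqo Av_infinite_antichain[OF assms] unfolding wqo_hom_def by simp
  qed
next
  assume "\<exists>n k. 2 * k < n \<and> graph_iso G (N_graph n k)"
  then obtain n k where "2 * k < n" "graph_iso G (N_graph n k)"
    by blast
  then show "wqo_hom (Av G)"
    using wqo_hom_Av_N_graph Av_graph_iso[of G "N_graph n k"] by simp
qed

end
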